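(* Let $n\ge3$. For $\alpha\in[1,\sqrt2]$ the center density of $D_n^\alpha$ satisfies $\delta(\mathbb{Z}^n)\le\delta(D_n^\alpha)\le\delta(D_n)$, i.e. $2^{-n}\le\delta(D_n^\alpha)\le 2^{-n/2-1}$, with the upper bound attained at $\alpha=1$ and the lower bound at $\alpha=\sqrt2$. Moreover, $\alpha\mapsto\delta(D_n^\alpha)$ is strictly decreasing on $[1,\sqrt2]$.
   Context: Let $\mathbf{e}_1,\dots,\mathbf{e}_n$ be the standard basis of $\mathbb{R}^n$. For $n\ge3$, $1\le\alpha\le\sqrt2$ and $\overline\alpha:=\sqrt{2-\alpha^2}$, $D_n^\alpha$ is the lattice with basis $\mathbf{b}_1=\alpha\mathbf{e}_1+\overline\alpha\mathbf{e}_2$, $\mathbf{b}_2=\alpha\mathbf{e}_2+\overline\alpha\mathbf{e}_3$, $\mathbf{b}_3=\overline\alpha\mathbf{e}_1+\alpha\mathbf{e}_3$, $\mathbf{b}_4=\overline\alpha\mathbf{e}_3-\alpha\mathbf{e}_4$, and $\mathbf{b}_k=\overline\alpha\mathbf{e}_{k-1}-\alpha\mathbf{e}_k$ for $5\le k\le n$; $D_n^1=D_n=\{\mathbf{x}\in\mathbb{Z}^n:\sum x_i\equiv0\pmod 2\}$ up to congruence and $D_n^{\sqrt2}=\sqrt2\mathbb{Z}^n$. Center density: $\delta(\Lambda)=\lambda_1(\Lambda)^n/(2^n\operatorname{vol}(\Lambda))$. *)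

theory Defs
  imports Complex_Main "Jordan_Normal_Form.Determinant"
begin

text \<open>Vectors of R^n are represented as functions nat => real, with coordinates indexed by 1..n
  (all other coordinates are 0 for the vectors considered here).\<close>

definition std_e :: "nat \<Rightarrow> nat \<Rightarrow> real" where
  "std_e i = (\<lambda>j. if j = i then 1 else 0)"

definition alpha_bar :: "real \<Rightarrow> real" where
  "alpha_bar a = sqrt (2 - a\<^sup>2)"

definition Dalpha_basis :: "real \<Rightarrow> nat \<Rightarrow> nat \<Rightarrow> real" where
  "Dalpha_basis a k =
     (if k = 1 then (\<lambda>j. a * std_e 1 j + alpha_bar a * std_e 2 j)
      else if k = 2 then (\<lambda>j. a * std_e 2 j + alpha_bar a * std_e 3 j)
      else if k = 3 then (\<lambda>j. alpha_bar a * std_e 1 j + a * std_e 3 j)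
      else if k = 4 then (\<lambda>j. alpha_bar a * std_e 3 j - a * std_e 4 j)
      else (\<lambda>j. alpha_bar a * std_e (k - 1) j - a * std_e k j))"

definition lattice_of :: "nat \<Rightarrow> (nat \<Rightarrow> nat \<Rightarrow> real) \<Rightarrow> (nat \<Rightarrow> real) set" where
  "lattice_of n b = {v. \<exists>c :: nat \<Rightarrow> int. v = (\<lambda>i. \<Sum>k = 1..n. of_int (c k) * b k i)}"

definition vnorm :: "nat \<Rightarrow> (nat \<Rightarrow> real) \<Rightarrow> real" where
  "vnorm n v = sqrt (\<Sum>i = 1..n. (v i)\<^sup>2)"

definition lambda1 :: "nat \<Rightarrow> (nat \<Rightarrow> nat \<Rightarrow> real) \<Rightarrow> real" where
  "lambda1 n b = Inf {vnorm n v | v. v \<in> lattice_of n b \<and> (\<exists>i\<in>{1..n}. v i \<noteq> 0)}"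

definition covol :: "nat \<Rightarrow> (nat \<Rightarrow> nat \<Rightarrow> real) \<Rightarrow> real" where
  "covol n b = \<bar>det (mat n n (\<lambda>(k, i). b (k + 1) (i + 1)))\<bar>"

definition center_density :: "nat \<Rightarrow> (nat \<Rightarrow> nat \<Rightarrow> real) \<Rightarrow> real" where
  "center_density n b = lambda1 n b ^ n / (2 ^ n * covol n b)"

end

theory Submission
  imports Defs
begin

text \<open>The vector \<open>b\<^sub>1\<close> has squared norm 2 and no nonzero lattice vector is shorter.
  The squared norm of the first \<open>n\<close> coordinates of \<open>\<Sum> c\<^sub>k b\<^sub>k\<close> sees the coefficient
  \<open>c\<^sub>n\<^sub>+\<^sub>1\<close> only through the \<open>n\<close>-th coordinate, so the bound propagates by induction on \<open>n\<close>
  from the block spanned by \<open>b\<^sub>1, b\<^sub>2, b\<^sub>3\<close>; hence \<open>\<lambda>\<^sub>1 = \<surd>2\<close> for every \<open>\<alpha>\<close>.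
  Beyond that block the basis matrix is triangular, so the covolume is \<open>(\<alpha>\<^sup>3 + \<beta>\<^sup>3) \<alpha>\<^sup>n\<^sup>-\<^sup>3\<close>
  with \<open>\<beta> = \<surd>(2 - \<alpha>\<^sup>2)\<close>. Both factors increase strictly with \<open>\<alpha>\<close> on \<open>[1, \<surd>2]\<close>, so the
  density decreases strictly from its value for \<open>D\<^sub>n\<close> at \<open>\<alpha> = 1\<close> to that of \<open>\<surd>2 \<int>\<^sup>n\<close>.\<close>

lemma det_mat_Suc_expand_last_col:
  "det (mat (Suc n) (Suc n) f :: real mat) =
    (\<Sum>i<Suc n. f (i, n) * (-1) ^ (i + n) *
        det (mat n n (\<lambda>(i', j'). f (if i' < i then i' else Suc i', j'))))"
proof -
  let ?A = "mat (Suc n) (Suc n) f :: real mat"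
  have "det ?A = (\<Sum>i<Suc n. ?A $$ (i, n) * cofactor ?A i n)"
    by (rule laplace_expansion_column) auto
  also have "\<dots> = (\<Sum>i<Suc n. f (i, n) * (-1) ^ (i + n) *
        det (mat n n (\<lambda>(i', j'). f (if i' < i then i' else Suc i', j'))))"
  proof (rule sum.cong[OF refl])
    fix i assume i: "i \<in> {..<Suc n}"
    have "mat_delete ?A i n = mat n n (\<lambda>(i', j'). f (if i' < i then i' else Suc i', j'))"
      unfolding mat_delete_def by (rule eq_matI) auto
    then show "?A $$ (i, n) * cofactor ?A i n = f (i, n) * (-1) ^ (i + n) *
        det (mat n n (\<lambda>(i', j'). f (if i' < i then i' else Suc i', j')))"
      using i unfolding cofactor_def by simp
  qed
  finally show ?thesis .
qed

lemma det_mat_3: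
  "det (mat 3 3 f :: real mat) =
     f (0,0) * f (1,1) * f (2,2) - f (0,0) * f (2,1) * f (1,2) - f (1,0) * f (0,1) * f (2,2)
   + f (1,0) * f (2,1) * f (0,2) + f (2,0) * f (0,1) * f (1,2) - f (2,0) * f (1,1) * f (0,2)"
  by (simp add: numeral_3_eq_3 numeral_2_eq_2 det_mat_Suc_expand_last_col lessThan_Suc algebra_simps)

lemma alpha_bar_bounds:
  assumes "1 \<le> a" "a \<le> sqrt 2"
  shows "0 \<le> alpha_bar a" "a\<^sup>2 + (alpha_bar a)\<^sup>2 = 2" "alpha_bar a \<le> 1"
proof -
  have "a\<^sup>2 \<le> (sqrt 2)\<^sup>2" using assms by (intro power_mono) auto
  then have a2: "a\<^sup>2 \<le> 2" by simp
  then show "0 \<le> alpha_bar a" unfolding alpha_bar_def by simp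
  have sq: "(alpha_bar a)\<^sup>2 = 2 - a\<^sup>2" unfolding alpha_bar_def using a2 by simp
  then show "a\<^sup>2 + (alpha_bar a)\<^sup>2 = 2" by simp
  have "1 \<le> a\<^sup>2" using assms by (simp add: one_le_power)
  then have "(alpha_bar a)\<^sup>2 \<le> 1\<^sup>2" using sq by simp
  then show "alpha_bar a \<le> 1" by (rule power2_le_imp_le) simp
qed

lemma Dalpha_basis_ge_4:
  "4 \<le> k \<Longrightarrow> Dalpha_basis a k j = (if j = k - 1 then alpha_bar a else 0) - (if j = k then a else 0)"
  unfolding Dalpha_basis_def std_e_def by auto

lemma Dalpha_basis_eq_0_beyond:
  "1 \<le> k \<Longrightarrow> k < j \<Longrightarrow> 4 \<le> j \<Longrightarrow> Dalpha_basis a k j = 0"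
  unfolding Dalpha_basis_def std_e_def by auto

definition Dalpha_vec :: "real \<Rightarrow> nat \<Rightarrow> (nat \<Rightarrow> int) \<Rightarrow> nat \<Rightarrow> real" where
  "Dalpha_vec a n c = (\<lambda>i. \<Sum>k = 1..n. of_int (c k) * Dalpha_basis a k i)"

text \<open>For \<open>n \<ge> 3\<close> this is the squared norm of the first \<open>n\<close> coordinates of
  \<open>\<Sum>\<^sub>k\<^sub>\<le>\<^sub>n\<^sub>+\<^sub>1 c\<^sub>k b\<^sub>k\<close> with \<open>c\<^sub>n\<^sub>+\<^sub>1 = t\<close>: the vector \<open>b\<^sub>n\<^sub>+\<^sub>1\<close> only adds \<open>alpha_bar a * t\<close> to the
  \<open>n\<close>-th coordinate (and \<open>-a * t\<close> to the next one).\<close>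
definition partial_sqnorm :: "real \<Rightarrow> nat \<Rightarrow> (nat \<Rightarrow> int) \<Rightarrow> int \<Rightarrow> real" where
  "partial_sqnorm a n c t = (\<Sum>i = 1..n. (Dalpha_vec a n c i + (if i = n then alpha_bar a * t else 0))\<^sup>2)"

lemma lattice_of_Dalpha_iff: "v \<in> lattice_of n (Dalpha_basis a) \<longleftrightarrow> (\<exists>c. v = Dalpha_vec a n c)"
  unfolding lattice_of_def Dalpha_vec_def by auto

lemma vnorm_Dalpha_vec: "vnorm n (Dalpha_vec a n c) = sqrt (partial_sqnorm a n c 0)"
  unfolding vnorm_def partial_sqnorm_def by (intro arg_cong[where f=sqrt] sum.cong) auto

lemma partial_sqnorm_nonneg: "0 \<le> partial_sqnorm a n c t"
  unfolding partial_sqnorm_def by (intro sum_nonneg) auto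

lemma Dalpha_vec_Suc:
  "Dalpha_vec a (Suc n) c i = Dalpha_vec a n c i + of_int (c (Suc n)) * Dalpha_basis a (Suc n) i"
  unfolding Dalpha_vec_def by simp

lemma Dalpha_vec_beyond: "3 \<le> n \<Longrightarrow> Dalpha_vec a n c (Suc n) = 0"
  unfolding Dalpha_vec_def by (rule sum.neutral) (auto simp: Dalpha_basis_eq_0_beyond)

lemma partial_sqnorm_Suc:
  assumes "3 \<le> n"
  shows "partial_sqnorm a (Suc n) c t = partial_sqnorm a n c (c (Suc n)) + (alpha_bar a * t - a * c (Suc n))\<^sup>2"
proof -
  have "partial_sqnorm a (Suc n) c t =
      (\<Sum>i = 1..n. (Dalpha_vec a (Suc n) c i)\<^sup>2) + (Dalpha_vec a (Suc n) c (Suc n) + alpha_bar a * t)\<^sup>2"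
    unfolding partial_sqnorm_def by simp
  also have "(\<Sum>i = 1..n. (Dalpha_vec a (Suc n) c i)\<^sup>2) = partial_sqnorm a n c (c (Suc n))"
    unfolding partial_sqnorm_def
  proof (rule sum.cong[OF refl])
    fix i assume i: "i \<in> {1..n}"
    have "Dalpha_basis a (Suc n) i = (if i = n then alpha_bar a else 0)"
      using assms i by (subst Dalpha_basis_ge_4) auto
    then show "(Dalpha_vec a (Suc n) c i)\<^sup>2 =
        (Dalpha_vec a n c i + (if i = n then alpha_bar a * c (Suc n) else 0))\<^sup>2"
      by (simp add: Dalpha_vec_Suc mult.commute)
  qed
  also have "Dalpha_vec a (Suc n) c (Suc n) = - a * c (Suc n)"
    using assms by (simp add: Dalpha_vec_Suc Dalpha_vec_beyond Dalpha_basis_ge_4)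
  finally show ?thesis by (simp add: algebra_simps)
qed

lemma partial_sqnorm_3:
  "partial_sqnorm a 3 c t = (a * c 1 + alpha_bar a * c 3)\<^sup>2 + (alpha_bar a * c 1 + a * c 2)\<^sup>2
     + (alpha_bar a * c 2 + a * c 3 + alpha_bar a * t)\<^sup>2"
  unfolding partial_sqnorm_def Dalpha_vec_def Dalpha_basis_def std_e_def
  by (simp add: numeral_3_eq_3 numeral_2_eq_2 algebra_simps)

lemma one_le_square_of_int: "(p::int) \<noteq> 0 \<Longrightarrow> (1::real) \<le> (of_int p)\<^sup>2"
  by (metis abs_le_square_iff abs_one of_int_1_le_iff of_int_abs power_one zero_less_abs_iff
      int_one_le_iff_zero_less)

lemma opposite_signs_if_small_combination:
  fixes x y :: real and p q :: int
  assumes "1 \<le> x" "0 \<le> y" "y \<le> 1" "p \<noteq> 0" "(x * p + y * q)\<^sup>2 < y\<^sup>2"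
  shows "p * q < 0"
proof (rule ccontr)
  assume "\<not> p * q < 0"
  then have pq: "0 \<le> real_of_int p * real_of_int q" by (metis of_int_0_le_iff of_int_mult not_less)
  have "1 \<le> x\<^sup>2 * (of_int p)\<^sup>2"
    using one_le_square_of_int[OF assms(4)] assms(1) mult_mono[of 1 "x\<^sup>2" 1 "(of_int p)\<^sup>2"]
    by (simp add: one_le_power)
  also have "\<dots> \<le> x\<^sup>2 * (of_int p)\<^sup>2 + 2 * (x * y) * (real_of_int p * real_of_int q) + y\<^sup>2 * (of_int q)\<^sup>2"
    using pq assms by simp
  also have "\<dots> = (x * p + y * q)\<^sup>2"
    by (simp add: power2_eq_square algebra_simps)
  finally have "1 \<le> (x * p + y * q)\<^sup>2" .
  moreover have "y\<^sup>2 \<le> 1" using assms by (simp add: power_le_one)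
  ultimately show False using assms(5) by linarith
qed

lemma shifted_term_ge:
  fixes a y :: real and s t :: int
  assumes "1 \<le> a" "0 \<le> y" "y \<le> 1" "2 \<le> \<bar>s\<bar>" "\<bar>t\<bar> = 1"
  shows "y\<^sup>2 \<le> (y * t - a * s)\<^sup>2"
proof -
  have "2 * a \<le> \<bar>a * s\<bar>"
    using assms(1,4) mult_left_mono[of 2 "\<bar>real_of_int s\<bar>" a] by (simp add: abs_mult)
  moreover have "\<bar>y * t\<bar> = y" using assms(2,5) by (simp add: abs_mult flip: of_int_abs)
  ultimately have "\<bar>y\<bar> \<le> \<bar>y * t - a * s\<bar>" using assms(1-3) by linarith
  then show ?thesis by (simp add: abs_le_square_iff)
qed

lemma ternary_form_ge_2:
  fixes x y :: real and c1 c2 c3 :: int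
  assumes "1 \<le> x" "0 \<le> y" "x\<^sup>2 + y\<^sup>2 = 2" "c1 \<noteq> 0 \<or> c2 \<noteq> 0 \<or> c3 \<noteq> 0"
  shows "2 \<le> (x * c1 + y * c3)\<^sup>2 + (y * c1 + x * c2)\<^sup>2 + (y * c2 + x * c3)\<^sup>2"
proof -
  define S where "S = c1\<^sup>2 + c2\<^sup>2 + c3\<^sup>2"
  define P where "P = c1 * c2 + c2 * c3 + c1 * c3"
  have S: "1 \<le> S" using assms(4) unfolding S_def
    by (smt (verit, best) power2_less_eq_zero_iff zero_le_power2 zero_less_power2)
  have "2 * (S + P) = (c1 + c2)\<^sup>2 + (c2 + c3)\<^sup>2 + (c1 + c3)\<^sup>2"
    unfolding S_def P_def by (simp add: power2_eq_square algebra_simps)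
  moreover have "c1 + c2 \<noteq> 0 \<or> c2 + c3 \<noteq> 0 \<or> c1 + c3 \<noteq> 0" using assms(4) by linarith
  ultimately have SP: "1 \<le> S + P"
    by (smt (verit, best) power2_less_eq_zero_iff zero_le_power2)
  have "0 \<le> (x - y)\<^sup>2" by simp
  then have xy: "x * y \<le> 1" using assms(3) by (simp add: power2_eq_square algebra_simps)
  have "2 \<le> 2 * real_of_int S + 2 * (x * y) * of_int P"
  proof (cases "0 \<le> P")
    case True
    then have "0 \<le> 2 * (x * y) * of_int P" using assms(1,2) by simp
    then show ?thesis using S by linarith
  next
    case False
    then have "1 * of_int P \<le> (x * y) * of_int P" using xy by (intro mult_right_mono_neg) auto
    then show ?thesis using SP by linarith
  qed
  also have "\<dots> = (x\<^sup>2 + y\<^sup>2) * S + 2 * (x * y) * P" using assms(3) by simp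
  also have "\<dots> = (x * c1 + y * c3)\<^sup>2 + (y * c1 + x * c2)\<^sup>2 + (y * c2 + x * c3)\<^sup>2"
    unfolding S_def P_def by (simp add: power2_eq_square algebra_simps)
  finally show ?thesis .
qed

lemma ternary_shifted_form_ge:
  fixes x y :: real and c1 c2 c3 t :: int
  assumes x: "1 \<le> x" and y: "0 \<le> y" "y \<le> 1" and t: "\<bar>t\<bar> = 1"
  shows "y\<^sup>2 \<le> (x * c1 + y * c3)\<^sup>2 + (y * c1 + x * c2)\<^sup>2 + (y * c2 + x * c3 + y * t)\<^sup>2"
proof (rule ccontr)
  assume "\<not> ?thesis"
  then have lt: "(x * c1 + y * c3)\<^sup>2 + (x * c2 + y * c1)\<^sup>2 + (x * c3 + y * of_int (c2 + t))\<^sup>2 < y\<^sup>2"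
    by (simp add: algebra_simps)
  note sq_nonneg = zero_le_power2[of "x * c1 + y * c3"] zero_le_power2[of "x * c2 + y * c1"]
      zero_le_power2[of "x * c3 + y * of_int (c2 + t)"]
  have T1: "(x * c1 + y * c3)\<^sup>2 < y\<^sup>2" using lt sq_nonneg by linarith
  have T2: "(x * c2 + y * c1)\<^sup>2 < y\<^sup>2" using lt sq_nonneg by linarith
  have T3: "(x * c3 + y * of_int (c2 + t))\<^sup>2 < y\<^sup>2" using lt sq_nonneg by linarith
  have y_le: "y\<^sup>2 \<le> (y * of_int p)\<^sup>2" if "p \<noteq> 0" for p :: int
    using one_le_square_of_int[OF that] mult_left_mono[of 1 "(of_int p)\<^sup>2" "y\<^sup>2"]
    by (simp add: power_mult_distrib)
  show False
  proof (cases "c1 = 0")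
    case True
    then have "c2 = 0" using opposite_signs_if_small_combination[OF x y _ T2] by force
    moreover have "c3 = 0" using y_le[of c3] T1 True by force
    moreover have "y\<^sup>2 \<le> (y * of_int t)\<^sup>2" using y_le t by force
    ultimately show False using T3 by simp
  next
    case False
    have c13: "c1 * c3 < 0" by (rule opposite_signs_if_small_combination[OF x y False T1])
    have "c2 \<noteq> 0" using y_le[OF False] T2 by force
    have c21: "c2 * c1 < 0" by (rule opposite_signs_if_small_combination[OF x y \<open>c2 \<noteq> 0\<close> T2])
    have "c3 \<noteq> 0" using c13 by auto
    have c3t: "c3 * (c2 + t) < 0" by (rule opposite_signs_if_small_combination[OF x y \<open>c3 \<noteq> 0\<close> T3])
    text \<open>\<open>c\<^sub>2\<close> and \<open>c\<^sub>3\<close> both have the sign opposite to \<open>c\<^sub>1\<close>, and \<open>|t| = 1\<close> cannot flip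
      the sign of \<open>c\<^sub>2\<close>.\<close>
    have "0 < c2 * c3" using c13 c21 by (auto simp: mult_less_0_iff zero_less_mult_iff)
    then have "0 \<le> c3 * (c2 + t)" using t by (auto simp: zero_less_mult_iff zero_le_mult_iff)
    with c3t show False by simp
  qed
qed

subsection \<open>The minimum distance\<close>

text \<open>Strengthened induction hypothesis: the second clause is needed when \<open>c\<^sub>n\<^sub>+\<^sub>1 = \<plusminus>1\<close>,
  where the new coordinate only contributes \<open>a\<^sup>2 = 2 - alpha_bar a\<^sup>2\<close>.\<close>
definition Dalpha_norm_invariant :: "real \<Rightarrow> nat \<Rightarrow> bool" where
  "Dalpha_norm_invariant a n \<longleftrightarrow>
     (\<forall>c. (\<exists>k\<in>{1..n}. c k \<noteq> 0) \<longrightarrow> 2 \<le> partial_sqnorm a n c 0) \<and>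
     (\<forall>c t. \<bar>t\<bar> = 1 \<longrightarrow> (alpha_bar a)\<^sup>2 \<le> partial_sqnorm a n c t)"

lemma Dalpha_norm_invariant_3:
  assumes "1 \<le> a" "a \<le> sqrt 2"
  shows "Dalpha_norm_invariant a 3"
  unfolding Dalpha_norm_invariant_def
proof (intro conjI allI impI)
  note ab = alpha_bar_bounds[OF assms]
  fix c :: "nat \<Rightarrow> int"
  assume "\<exists>k\<in>{1..3}. c k \<noteq> 0"
  then have "c 1 \<noteq> 0 \<or> c 2 \<noteq> 0 \<or> c 3 \<noteq> 0"
    by (auto simp: numeral_3_eq_3 numeral_2_eq_2 le_Suc_eq)
  from ternary_form_ge_2[OF assms(1) ab(1,2) this] show "2 \<le> partial_sqnorm a 3 c 0"
    by (simp add: partial_sqnorm_3)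
next
  note ab = alpha_bar_bounds[OF assms]
  fix c :: "nat \<Rightarrow> int" and t :: int
  assume "\<bar>t\<bar> = 1"
  from ternary_shifted_form_ge[OF assms(1) ab(1,3) this] show "(alpha_bar a)\<^sup>2 \<le> partial_sqnorm a 3 c t"
    by (simp add: partial_sqnorm_3)
qed

lemma partial_sqnorm_Suc_ge_2:
  assumes a: "1 \<le> a" "a \<le> sqrt 2" and n: "3 \<le> n"
    and IH0: "\<And>c. \<exists>k\<in>{1..n}. c k \<noteq> 0 \<Longrightarrow> 2 \<le> partial_sqnorm a n c 0"
    and IH1: "\<And>c t. \<bar>t\<bar> = 1 \<Longrightarrow> (alpha_bar a)\<^sup>2 \<le> partial_sqnorm a n c t"
    and nonzero: "\<exists>k\<in>{1..Suc n}. c k \<noteq> 0"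
  shows "2 \<le> partial_sqnorm a (Suc n) c 0"
proof -
  define s where "s = c (Suc n)"
  have eq: "partial_sqnorm a (Suc n) c 0 = partial_sqnorm a n c s + a\<^sup>2 * (of_int s)\<^sup>2"
    unfolding s_def using partial_sqnorm_Suc[OF n, of a c 0] by (simp add: power_mult_distrib)
  consider "s = 0" | "\<bar>s\<bar> = 1" | "2 \<le> \<bar>s\<bar>" by linarith
  then show ?thesis
  proof cases
    case 1
    then have "\<exists>k\<in>{1..n}. c k \<noteq> 0" using nonzero unfolding s_def by (auto simp: le_Suc_eq)
    then show ?thesis using IH0 eq 1 by simp
  next
    case 2
    then have "(of_int s)\<^sup>2 = (1::real)" by (cases "s = 1") (auto simp: abs_if split: if_splits)
    then show ?thesis using IH1[OF 2, of c] eq alpha_bar_bounds(2)[OF a] by simp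
  next
    case 3
    have "(2::real) \<le> \<bar>of_int s\<bar>" using 3 by linarith
    then have "2 * 2 \<le> (real_of_int s)\<^sup>2" using abs_le_square_iff[of 2 "real_of_int s"] by simp
    moreover have "1 \<le> a\<^sup>2" using a by (simp add: one_le_power)
    ultimately have "1 * 4 \<le> a\<^sup>2 * (of_int s)\<^sup>2" by (intro mult_mono) auto
    then show ?thesis using eq partial_sqnorm_nonneg[of a n c s] by linarith
  qed
qed

lemma partial_sqnorm_Suc_shifted_ge:
  assumes a: "1 \<le> a" "a \<le> sqrt 2" and n: "3 \<le> n"
    and IH1: "\<And>c t. \<bar>t\<bar> = 1 \<Longrightarrow> (alpha_bar a)\<^sup>2 \<le> partial_sqnorm a n c t"
    and t: "\<bar>t\<bar> = 1"
  shows "(alpha_bar a)\<^sup>2 \<le> partial_sqnorm a (Suc n) c t"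
proof -
  define s where "s = c (Suc n)"
  have eq: "partial_sqnorm a (Suc n) c t = partial_sqnorm a n c s + (alpha_bar a * t - a * s)\<^sup>2"
    unfolding s_def using partial_sqnorm_Suc[OF n] by simp
  consider "s = 0" | "\<bar>s\<bar> = 1" | "2 \<le> \<bar>s\<bar>" by linarith
  then show ?thesis
  proof cases
    case 1
    then have "(alpha_bar a * t - a * s)\<^sup>2 = (alpha_bar a)\<^sup>2"
      using t by (cases "t = 1") (auto simp: abs_if split: if_splits)
    then show ?thesis using eq partial_sqnorm_nonneg[of a n c s] by linarith
  next
    case 2
    then show ?thesis using IH1[OF 2, of c] eq zero_le_power2[of "alpha_bar a * t - a * s"] by linarith
  next
    case 3
    with shifted_term_ge[OF a(1) alpha_bar_bounds(1,3)[OF a] 3 t] show ?thesis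
      using eq partial_sqnorm_nonneg[of a n c s] by linarith
  qed
qed

lemma Dalpha_norm_invariant_Suc:
  assumes "1 \<le> a" "a \<le> sqrt 2" "3 \<le> n" "Dalpha_norm_invariant a n"
  shows "Dalpha_norm_invariant a (Suc n)"
  using assms partial_sqnorm_Suc_ge_2[OF assms(1-3)] partial_sqnorm_Suc_shifted_ge[OF assms(1-3)]
  unfolding Dalpha_norm_invariant_def by blast

lemma Dalpha_norm_invariant:
  assumes "1 \<le> a" "a \<le> sqrt 2" "3 \<le> n"
  shows "Dalpha_norm_invariant a n"
  using assms(3)
proof (induction n rule: nat_induct_at_least)
  case base
  show ?case using Dalpha_norm_invariant_3[OF assms(1,2)] .
next
  case (Suc n)
  then show ?case using Dalpha_norm_invariant_Suc[OF assms(1,2)] by blast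
qed

lemma partial_sqnorm_first_basis_vector:
  assumes "1 \<le> a" "a \<le> sqrt 2" "3 \<le> n"
  shows "partial_sqnorm a n (\<lambda>k. of_bool (k = 1)) 0 = 2"
  using assms(3)
proof (induction n rule: nat_induct_at_least)
  case base
  show ?case using alpha_bar_bounds[OF assms(1,2)] by (simp add: partial_sqnorm_3)
next
  case (Suc n)
  then show ?case using partial_sqnorm_Suc[OF Suc.hyps, of a _ 0] by simp
qed

lemma sum_first_coefficient:
  "1 \<le> (n::nat) \<Longrightarrow> (\<Sum>k = 1..n. of_int (of_bool (k = 1)) * f k) = (f 1 :: 'a::ring_1)"
  by (simp add: sum.If_cases)

lemma Dalpha_vec_first_basis_vector: "1 \<le> n \<Longrightarrow> Dalpha_vec a n (\<lambda>k. of_bool (k = 1)) = Dalpha_basis a 1"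
  unfolding Dalpha_vec_def by (rule ext) (rule sum_first_coefficient)

lemma lambda1_Dalpha:
  assumes "1 \<le> a" "a \<le> sqrt 2" "3 \<le> n"
  shows "lambda1 n (Dalpha_basis a) = sqrt 2"
  unfolding lambda1_def
proof (rule cInf_eq_minimum)
  let ?c = "\<lambda>k. of_bool (k = 1) :: int"
  have "Dalpha_vec a n ?c = Dalpha_basis a 1"
    using assms(3) by (intro Dalpha_vec_first_basis_vector) simp
  then have "Dalpha_vec a n ?c 1 \<noteq> 0"
    using assms by (simp add: Dalpha_basis_def std_e_def)
  moreover have "vnorm n (Dalpha_vec a n ?c) = sqrt 2"
    using partial_sqnorm_first_basis_vector[OF assms] by (simp add: vnorm_Dalpha_vec)
  moreover have "Dalpha_vec a n ?c \<in> lattice_of n (Dalpha_basis a)"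
    using lattice_of_Dalpha_iff by blast
  ultimately show "sqrt 2 \<in> {vnorm n v |v. v \<in> lattice_of n (Dalpha_basis a) \<and> (\<exists>i\<in>{1..n}. v i \<noteq> 0)}"
    using assms(3) by (intro CollectI exI[of _ "Dalpha_vec a n ?c"]) auto
next
  fix x assume "x \<in> {vnorm n v |v. v \<in> lattice_of n (Dalpha_basis a) \<and> (\<exists>i\<in>{1..n}. v i \<noteq> 0)}"
  then obtain v i where x: "x = vnorm n v" and v: "v \<in> lattice_of n (Dalpha_basis a)"
    and i: "i \<in> {1..n}" "v i \<noteq> 0"
    by blast
  from v obtain c where c: "v = Dalpha_vec a n c" using lattice_of_Dalpha_iff by blast
  have "\<exists>k\<in>{1..n}. c k \<noteq> 0"
  proof (rule ccontr)
    assume "\<not> ?thesis"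
    then have "Dalpha_vec a n c i = 0" unfolding Dalpha_vec_def by (intro sum.neutral) auto
    with i(2) c show False by simp
  qed
  then have "2 \<le> partial_sqnorm a n c 0"
    using Dalpha_norm_invariant[OF assms] unfolding Dalpha_norm_invariant_def by blast
  then show "sqrt 2 \<le> x" unfolding x c vnorm_Dalpha_vec by simp
qed

lemma lambda1_std_e:
  assumes "1 \<le> n"
  shows "lambda1 n std_e = 1"
  unfolding lambda1_def
proof (rule cInf_eq_minimum)
  have "std_e 1 \<in> lattice_of n std_e" unfolding lattice_of_def
    by (intro CollectI exI[of _ "\<lambda>k. of_bool (k = 1)"] ext sum_first_coefficient[OF assms, symmetric])
  moreover have "vnorm n (std_e 1) = 1"
  proof -
    have "(\<Sum>i = 1..n. (std_e 1 i)\<^sup>2) = (\<Sum>i = 1..n. if i = 1 then 1 else 0)"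
      by (rule sum.cong) (auto simp: std_e_def)
    then show ?thesis using assms by (simp add: vnorm_def sum.delta)
  qed
  moreover have "std_e 1 1 \<noteq> 0" by (simp add: std_e_def)
  ultimately show "1 \<in> {vnorm n v |v. v \<in> lattice_of n std_e \<and> (\<exists>i\<in>{1..n}. v i \<noteq> 0)}"
    using assms by (intro CollectI exI[of _ "std_e 1"]) auto
next
  fix x assume "x \<in> {vnorm n v |v. v \<in> lattice_of n std_e \<and> (\<exists>i\<in>{1..n}. v i \<noteq> 0)}"
  then obtain c i where x: "x = vnorm n (\<lambda>i. \<Sum>k = 1..n. of_int (c k) * std_e k i)"
    and i: "i \<in> {1..n}" "(\<Sum>k = 1..n. of_int (c k) * std_e k i) \<noteq> 0"
    unfolding lattice_of_def by blast
  have "(\<Sum>k = 1..n. of_int (c k) * std_e k i) = (\<Sum>k = 1..n. if k = i then of_int (c k) else 0)"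
    unfolding std_e_def by (rule sum.cong) auto
  also have "\<dots> = of_int (c i)" using i(1) by (simp add: sum.delta)
  finally have coord: "(\<Sum>k = 1..n. of_int (c k) * std_e k i) = of_int (c i)" .
  have "1 \<le> (\<Sum>k = 1..n. of_int (c k) * std_e k i)\<^sup>2"
    using i(2) coord one_le_square_of_int by simp
  also have "\<dots> \<le> (\<Sum>j = 1..n. (\<Sum>k = 1..n. of_int (c k) * std_e k j)\<^sup>2)"
    by (rule member_le_sum) (use i(1) in auto)
  finally show "1 \<le> x" unfolding x vnorm_def by simp
qed

subsection \<open>Covolumes\<close>

lemma covol_std_e: "covol n std_e = 1"
proof -
  have "mat n n (\<lambda>(k, i). std_e (k + 1) (i + 1)) = (1\<^sub>m n :: real mat)"
    by (rule eq_matI) (auto simp: std_e_def)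
  then show ?thesis unfolding covol_def by simp
qed

lemma det_Dalpha_basis:
  assumes "3 \<le> n"
  shows "det (mat n n (\<lambda>(k, i). Dalpha_basis a (k + 1) (i + 1))) = (a ^ 3 + alpha_bar a ^ 3) * (- a) ^ (n - 3)"
  using assms
proof (induction n rule: nat_induct_at_least)
  case base
  show ?case unfolding det_mat_3 by (simp add: Dalpha_basis_def std_e_def power3_eq_cube)
next
  case (Suc n)
  let ?f = "\<lambda>(k, i). Dalpha_basis a (k + 1) (i + 1)"
  text \<open>The last column has a single nonzero entry \<open>-\<alpha>\<close>, on the diagonal.\<close>
  have "(\<Sum>i<n. ?f (i, n) * (-1) ^ (i + n) * det (mat n n (\<lambda>(i', j'). ?f (if i' < i then i' else Suc i', j')))) = 0"
    using Suc.hyps by (intro sum.neutral) (auto simp: Dalpha_basis_eq_0_beyond)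
  moreover have "mat n n (\<lambda>(i', j'). ?f (if i' < n then i' else Suc i', j')) = mat n n ?f"
    by (rule eq_matI) auto
  ultimately have "det (mat (Suc n) (Suc n) ?f) = ?f (n, n) * det (mat n n ?f)"
    unfolding det_mat_Suc_expand_last_col sum.lessThan_Suc by simp
  also have "?f (n, n) = - a" using Suc.hyps by (simp add: Dalpha_basis_ge_4)
  moreover obtain m where "n = m + 3" using Suc.hyps by (metis le_add_diff_inverse2)
  ultimately show ?case using Suc.IH by simp
qed

definition cube_sum :: "real \<Rightarrow> real" where
  "cube_sum a = a ^ 3 + alpha_bar a ^ 3"

lemma cube_sum_pos: "1 \<le> a \<Longrightarrow> a \<le> sqrt 2 \<Longrightarrow> 0 < cube_sum a"
  unfolding cube_sum_def using alpha_bar_bounds[of a] by (simp add: add_pos_nonneg)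

lemma covol_Dalpha:
  assumes "1 \<le> a" "a \<le> sqrt 2" "3 \<le> n"
  shows "covol n (Dalpha_basis a) = cube_sum a * a ^ (n - 3)"
  using cube_sum_pos[OF assms(1,2)] assms
  unfolding covol_def det_Dalpha_basis[OF assms(3)] cube_sum_def[symmetric]
  by (simp add: abs_mult power_abs)

text \<open>With \<open>p = \<alpha> \<beta>\<close>, which decreases from 1 to 0 on \<open>[1, \<surd>2]\<close>, one has
  \<open>(\<alpha>\<^sup>3 + \<beta>\<^sup>3)\<^sup>2 = 8 - 6 p\<^sup>2 + 2 p\<^sup>3\<close>, a decreasing function of \<open>p \<in> [0, 1]\<close>.\<close>
lemma cube_sum_sq_eq:
  fixes u v :: real
  assumes "u\<^sup>2 + v\<^sup>2 = 2"
  shows "(u ^ 3 + v ^ 3)\<^sup>2 = 8 - 6 * (u * v)\<^sup>2 + 2 * (u * v) ^ 3"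
proof -
  have "(u ^ 3 + v ^ 3)\<^sup>2 = (u\<^sup>2 + v\<^sup>2) ^ 3 - 3 * (u * v)\<^sup>2 * (u\<^sup>2 + v\<^sup>2) + 2 * (u * v) ^ 3"
    by (simp add: power2_eq_square power3_eq_cube algebra_simps)
  then show ?thesis using assms by simp
qed

lemma cube_sum_strict_mono:
  assumes "1 \<le> a" "a < b" "b \<le> sqrt 2"
  shows "cube_sum a < cube_sum b"
proof -
  have "a \<le> sqrt 2" "1 \<le> b" using assms by auto
  note A = alpha_bar_bounds[OF assms(1) this(1)] and B = alpha_bar_bounds[OF this(2) assms(3)]
  define p where "p = a * alpha_bar a"
  define q where "q = b * alpha_bar b"
  have nonneg: "0 \<le> p" "0 \<le> q" unfolding p_def q_def using A B assms by auto
  have "(alpha_bar a)\<^sup>2 = 2 - a\<^sup>2" "(alpha_bar b)\<^sup>2 = 2 - b\<^sup>2" using A(2) B(2) by simp_all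
  then have "p\<^sup>2 = a\<^sup>2 * (2 - a\<^sup>2)" "q\<^sup>2 = b\<^sup>2 * (2 - b\<^sup>2)"
    unfolding p_def q_def by (simp_all add: power_mult_distrib)
  then have "p\<^sup>2 - q\<^sup>2 = (b\<^sup>2 - a\<^sup>2) * (a\<^sup>2 + b\<^sup>2 - 2)"
    by (simp add: algebra_simps power2_eq_square)
  moreover have "a\<^sup>2 < b\<^sup>2" using assms by (intro power_strict_mono) auto
  moreover have "1 \<le> a\<^sup>2" using assms by (simp add: one_le_power)
  ultimately have "q\<^sup>2 < p\<^sup>2" by (smt (verit) mult_pos_pos)
  then have "q < p" using nonneg by (simp add: power_less_imp_less_base)
  have "0 \<le> (a - alpha_bar a)\<^sup>2" by simp
  then have "p \<le> 1" using A(2) unfolding p_def by (simp add: power2_eq_square algebra_simps)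
  have "(cube_sum b)\<^sup>2 - (cube_sum a)\<^sup>2 = 2 * (p - q) * (3 * (p + q) - (p * p + p * q + q * q))"
    unfolding cube_sum_def cube_sum_sq_eq[OF A(2)] cube_sum_sq_eq[OF B(2)] p_def[symmetric] q_def[symmetric]
    by (simp add: power2_eq_square power3_eq_cube algebra_simps)
  also have "0 < \<dots>"
  proof -
    have "p * p \<le> p" "p * q \<le> p" "q * q \<le> q"
      using nonneg \<open>q < p\<close> \<open>p \<le> 1\<close> by (auto intro: mult_left_le)
    then have "0 < 3 * (p + q) - (p * p + p * q + q * q)" using nonneg \<open>q < p\<close> by (smt (verit))
    then show ?thesis using \<open>q < p\<close> by simp
  qed
  finally have "(cube_sum a)\<^sup>2 < (cube_sum b)\<^sup>2" by simp
  then show ?thesis using cube_sum_pos[OF \<open>1 \<le> b\<close> assms(3)] by (simp add: power_less_imp_less_base)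
qed

subsection \<open>Center densities\<close>

lemma center_density_Dalpha:
  assumes "1 \<le> a" "a \<le> sqrt 2" "3 \<le> n"
  shows "center_density n (Dalpha_basis a) = sqrt 2 ^ n / (2 ^ n * (cube_sum a * a ^ (n - 3)))"
  unfolding center_density_def lambda1_Dalpha[OF assms] covol_Dalpha[OF assms] ..

lemma center_density_Dalpha_strict_antimono:
  assumes "1 \<le> a" "a < b" "b \<le> sqrt 2" "3 \<le> n"
  shows "center_density n (Dalpha_basis b) < center_density n (Dalpha_basis a)"
proof -
  have "a \<le> sqrt 2" "1 \<le> b" using assms by auto
  have pos: "0 < cube_sum a * a ^ (n - 3)" using cube_sum_pos[OF assms(1) \<open>a \<le> sqrt 2\<close>] assms by simp
  have "cube_sum a * a ^ (n - 3) < cube_sum b * a ^ (n - 3)"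
    using cube_sum_strict_mono[OF assms(1-3)] assms(1) by simp
  also have "\<dots> \<le> cube_sum b * b ^ (n - 3)"
    using cube_sum_pos[OF \<open>1 \<le> b\<close> assms(3)] assms by (intro mult_left_mono power_mono) auto
  finally have "(2::real) ^ n * (cube_sum a * a ^ (n - 3)) < 2 ^ n * (cube_sum b * b ^ (n - 3))" by simp
  then have "sqrt 2 ^ n / (2 ^ n * (cube_sum b * b ^ (n - 3))) < sqrt 2 ^ n / (2 ^ n * (cube_sum a * a ^ (n - 3)))"
    using pos by (intro divide_strict_left_mono) auto
  then show ?thesis
    using center_density_Dalpha[OF assms(1) \<open>a \<le> sqrt 2\<close> assms(4)] center_density_Dalpha[OF \<open>1 \<le> b\<close> assms(3,4)]
    by simp
qed

lemma two_powr_minus: "(2::real) powr (- real n) = 1 / 2 ^ n"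
  by (simp add: powr_minus powr_realpow divide_inverse)

lemma two_powr_minus_half_minus_1: "(2::real) powr (- real n / 2 - 1) = sqrt 2 ^ n / (2 ^ n * 2)"
proof -
  have "sqrt 2 ^ n = (2 powr real n) powr (1/2)"
    by (simp add: real_sqrt_power powr_half_sqrt powr_realpow)
  also have "\<dots> = 2 powr (real n / 2)" by (simp add: powr_powr)
  finally have "sqrt 2 ^ n = 2 powr (real n / 2)" .
  moreover have "(2::real) powr (- real n / 2 - 1) = 2 powr (real n / 2) / 2 powr (real n + 1)"
    by (simp add: powr_diff [symmetric] field_simps)
  moreover have "2 powr (real n + 1) = (2::real) ^ n * 2" by (simp add: powr_add powr_realpow)
  ultimately show ?thesis by simp
qed

lemma center_density_Dalpha_1:
  assumes "3 \<le> n"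
  shows "center_density n (Dalpha_basis 1) = 2 powr (- real n / 2 - 1)"
proof -
  have "cube_sum 1 = 2" by (simp add: cube_sum_def alpha_bar_def)
  then have "center_density n (Dalpha_basis 1) = sqrt 2 ^ n / (2 ^ n * 2)"
    using center_density_Dalpha[of 1 n] assms by simp
  then show ?thesis unfolding two_powr_minus_half_minus_1 .
qed

lemma center_density_Dalpha_sqrt_2:
  assumes "3 \<le> n"
  shows "center_density n (Dalpha_basis (sqrt 2)) = 2 powr (- real n)"
proof -
  have "cube_sum (sqrt 2) * sqrt 2 ^ (n - 3) = sqrt 2 ^ 3 * sqrt 2 ^ (n - 3)"
    by (simp add: cube_sum_def alpha_bar_def)
  also have "\<dots> = sqrt 2 ^ n" using assms by (simp flip: power_add)
  finally show ?thesis using center_density_Dalpha[of "sqrt 2" n] assms by (simp add: two_powr_minus)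
qed

lemma center_density_std_e: "1 \<le> n \<Longrightarrow> center_density n std_e = 2 powr (- real n)"
  unfolding center_density_def by (simp add: lambda1_std_e covol_std_e two_powr_minus)

theorem mainTheorem17:
  fixes n :: nat
  assumes "n \<ge> 3"
  shows "(\<forall>a::real. 1 \<le> a \<and> a \<le> sqrt 2 \<longrightarrow>
            center_density n std_e \<le> center_density n (Dalpha_basis a)
          \<and> center_density n (Dalpha_basis a) \<le> center_density n (Dalpha_basis 1)
          \<and> 2 powr (- real n) \<le> center_density n (Dalpha_basis a)
          \<and> center_density n (Dalpha_basis a) \<le> 2 powr (- real n / 2 - 1))
       \<and> center_density n std_e = 2 powr (- real n)
       \<and> center_density n (Dalpha_basis 1) = 2 powr (- real n / 2 - 1)
       \<and> center_density n (Dalpha_basis (sqrt 2)) = 2 powr (- real n)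
       \<and> (\<forall>a b::real. 1 \<le> a \<and> a < b \<and> b \<le> sqrt 2 \<longrightarrow>
            center_density n (Dalpha_basis b) < center_density n (Dalpha_basis a))"
proof -
  have std: "center_density n std_e = 2 powr (- real n)"
    using assms by (simp add: center_density_std_e)
  note one = center_density_Dalpha_1[OF assms] and sqrt2 = center_density_Dalpha_sqrt_2[OF assms]
  have antimono: "center_density n (Dalpha_basis b) \<le> center_density n (Dalpha_basis a)"
    if "1 \<le> a" "a \<le> b" "b \<le> sqrt 2" for a b :: real
    using center_density_Dalpha_strict_antimono[of a b n] that assms
    by (cases "a = b") auto
  show ?thesis
    using std one sqrt2 antimono[of _ "sqrt 2"] antimono[of 1] center_density_Dalpha_strict_antimono assms
    by auto
qed

end
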